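(* Let $M=(S,\mathrm{Act},P)$ be an MDP and $T\subseteq S$. Let $(x,r,\sigma)$ with $x\in[0,1]^S$, $r\in\mathbb{N}_\infty^S$ and $\sigma$ a strategy satisfy: (1) $D^{\sigma}(r)\le r$; (2) $x\le B^{\sigma}(x)$; (3) for all $s\in S\setminus T$, $x(s)>0$ implies $r(s)<\infty$ (inequalities pointwise). Then for all $s\in S$: $\Pr^{\max}_s(\Diamond T)\ge\Pr^{\sigma}_s(\Diamond T)\ge x(s)$.
   Context: An MDP is a tuple $M=(S,\mathrm{Act},P)$ with $S$ finite, $\mathrm{Act}$ finite, $P\colon S\times\mathrm{Act}\times S\to[0,1]$ with $\sum_{s'}P(s,a,s')\in\{0,1\}$; $\mathrm{Act}(s)=\{a\mid\sum_{s'}P(s,a,s')=1\}$ is nonempty for all $s$; $\mathrm{Post}(s,a)=\{s'\mid P(s,a,s')>0\}$. A strategy is $\sigma\colon S\to\mathrm{Act}$ with $\sigma(s)\in\mathrm{Act}(s)$, inducing a Markov chain with transitions $P(s,\sigma(s),\cdot)$; $\Pr^\sigma_s(\Diamond T)$ is the probability of visiting $T$ from $s$ and $\Pr^{\max}_s(\Diamond T)=\max_\sigma\Pr^\sigma_s(\Diamond T)$. $\mathbb{N}_\infty=\mathbb{N}\cup\{\infty\}$, $1+\infty=\infty$. $D^{\sigma}(r)(s)=0$ for $s\in T$ and $1+\min_{s'\in\mathrm{Post}(s,\sigma(s))}r(s')$ for $s\notin T$. $B^{\sigma}(x)(s)=1$ for $s\in T$ and $\sum_{s'\in\mathrm{Post}(s,\sigma(s))}P(s,\sigma(s),s')x(s')$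 for $s\notin T$. *)

theory Defs
  imports Complex_Main "HOL-Library.Extended_Nat"
begin

definition is_mdp :: "('s::finite \<Rightarrow> 'a::finite \<Rightarrow> 's \<Rightarrow> real) \<Rightarrow> bool" where
  "is_mdp P \<longleftrightarrow>
     (\<forall>s a s'. 0 \<le> P s a s' \<and> P s a s' \<le> 1) \<and>
     (\<forall>s a. (\<Sum>s'\<in>UNIV. P s a s') \<in> {0, 1}) \<and>
     (\<forall>s. \<exists>a. (\<Sum>s'\<in>UNIV. P s a s') = 1)"

definition Act :: "('s::finite \<Rightarrow> 'a \<Rightarrow> 's \<Rightarrow> real) \<Rightarrow> 's \<Rightarrow> 'a set" where
  "Act P s = {a. (\<Sum>s'\<in>UNIV. P s a s') = 1}"

definition Post :: "('s \<Rightarrow> 'a \<Rightarrow> 's \<Rightarrow> real) \<Rightarrow> 's \<Rightarrow> 'a \<Rightarrow> 's set" where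
  "Post P s a = {s'. P s a s' > 0}"

definition is_strategy :: "('s::finite \<Rightarrow> 'a \<Rightarrow> 's \<Rightarrow> real) \<Rightarrow> ('s \<Rightarrow> 'a) \<Rightarrow> bool" where
  "is_strategy P \<sigma> \<longleftrightarrow> (\<forall>s. \<sigma> s \<in> Act P s)"

text \<open>Probability, in the Markov chain induced by \<sigma>, that the first visit to T
  happens exactly at step n (sum over all finite paths s_0 \<dots> s_n with
  s_n \<in> T and s_i \<notin> T for i < n of the product of transition probabilities).\<close>

fun first_hit :: "('s::finite \<Rightarrow> 'a \<Rightarrow> 's \<Rightarrow> real) \<Rightarrow> ('s \<Rightarrow> 'a) \<Rightarrow> 's set \<Rightarrow> nat \<Rightarrow> 's \<Rightarrow> real" where
  "first_hit P \<sigma> T 0 s = (if s \<in> T then 1 else 0)"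
| "first_hit P \<sigma> T (Suc n) s =
     (if s \<in> T then 0 else (\<Sum>s'\<in>UNIV. P s (\<sigma> s) s' * first_hit P \<sigma> T n s'))"

text \<open>Pr^\<sigma>_s(\<Diamond>T): the probability of visiting T from s, i.e. the measure of the
  disjoint union over n of the cylinder sets "first visit to T at step n".\<close>

definition reach_prob :: "('s::finite \<Rightarrow> 'a \<Rightarrow> 's \<Rightarrow> real) \<Rightarrow> ('s \<Rightarrow> 'a) \<Rightarrow> 's set \<Rightarrow> 's \<Rightarrow> real" where
  "reach_prob P \<sigma> T s = (\<Sum>n. first_hit P \<sigma> T n s)"

definition max_reach_prob :: "('s::finite \<Rightarrow> 'a::finite \<Rightarrow> 's \<Rightarrow> real) \<Rightarrow> 's set \<Rightarrow> 's \<Rightarrow> real" where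
  "max_reach_prob P T s = Max {reach_prob P \<sigma> T s | \<sigma>. is_strategy P \<sigma>}"

definition Dop :: "('s::finite \<Rightarrow> 'a \<Rightarrow> 's \<Rightarrow> real) \<Rightarrow> ('s \<Rightarrow> 'a) \<Rightarrow> 's set \<Rightarrow> ('s \<Rightarrow> enat) \<Rightarrow> 's \<Rightarrow> enat" where
  "Dop P \<sigma> T r s = (if s \<in> T then 0 else 1 + Min (r ` Post P s (\<sigma> s)))"

definition Bop :: "('s::finite \<Rightarrow> 'a \<Rightarrow> 's \<Rightarrow> real) \<Rightarrow> ('s \<Rightarrow> 'a) \<Rightarrow> 's set \<Rightarrow> ('s \<Rightarrow> real) \<Rightarrow> 's \<Rightarrow> real" where
  "Bop P \<sigma> T x s = (if s \<in> T then 1 else (\<Sum>s'\<in>Post P s (\<sigma> s). P s (\<sigma> s) s' * x s'))"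

end

theory Submission
  imports Defs
begin

text \<open>Let \<open>y\<close> be the reachability probability under \<sigma>; it is a fixpoint of the Bellman
  operator \<open>B\<^sup>\<sigma>\<close>. Suppose \<open>x - y\<close> had a positive maximum \<open>m\<close>. At a maximiser \<open>s\<close> we have
  \<open>s \<notin> T\<close> and \<open>x s > 0\<close>, so \<open>r s\<close> is finite. Since \<open>x - y\<close> is a sub-solution of the
  averaging equation at \<open>s\<close>, every \<sigma>-successor of \<open>s\<close> is a maximiser as well, and
  \<open>D\<^sup>\<sigma>(r) \<le> r\<close> provides such a successor with strictly smaller rank. Descending along
  finite ranks must stop, a contradiction.\<close>

lemma weighted_mean_ge_bound_imp_eq:
  fixes p f :: "'b \<Rightarrow> real"
  assumes "finite A" and p_nonneg: "\<forall>a\<in>A. 0 \<le> p a" and "sum p A = 1"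
    and f_le: "\<forall>a\<in>A. f a \<le> m" and mean_ge: "m \<le> (\<Sum>a\<in>A. p a * f a)"
    and "a \<in> A" and "p a > 0"
  shows "f a = m"
proof -
  have "(\<Sum>a\<in>A. p a * (m - f a)) = sum p A * m - (\<Sum>a\<in>A. p a * f a)"
    by (simp add: right_diff_distrib sum_subtractf sum_distrib_right)
  also have "\<dots> \<le> 0" using \<open>sum p A = 1\<close> mean_ge by simp
  finally have "(\<Sum>a\<in>A. p a * (m - f a)) = 0"
    by (intro antisym sum_nonneg) (use p_nonneg f_le in auto)
  then have "\<forall>a\<in>A. p a * (m - f a) = 0"
    using sum_nonneg_eq_0_iff[OF \<open>finite A\<close>, of "\<lambda>a. p a * (m - f a)"] p_nonneg f_le
    by auto
  then have "p a * (m - f a) = 0" using \<open>a \<in> A\<close> by blast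
  then show ?thesis using \<open>p a > 0\<close> by simp
qed

lemma mdp_nonneg: "is_mdp P \<Longrightarrow> 0 \<le> P s a s'"
  by (simp add: is_mdp_def)

lemma sum_strategy_eq_1: "is_strategy P \<sigma> \<Longrightarrow> (\<Sum>s'\<in>UNIV. P s (\<sigma> s) s') = 1"
  by (simp add: is_strategy_def Act_def)

lemma sum_Post_eq_sum_UNIV:
  assumes "is_mdp P"
  shows "(\<Sum>s'\<in>Post P s a. P s a s' * f s') = (\<Sum>s'\<in>UNIV. P s a s' * f s')"
  by (rule sum.mono_neutral_left)
    (use mdp_nonneg[OF assms] in \<open>auto simp: Post_def less_le\<close>)

lemma Post_strategy_nonempty:
  assumes "is_mdp P" "is_strategy P \<sigma>"
  shows "Post P s (\<sigma> s) \<noteq> {}"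
proof
  assume "Post P s (\<sigma> s) = {}"
  then have "P s (\<sigma> s) s' = 0" for s'
    using mdp_nonneg[OF assms(1), of s "\<sigma> s" s'] by (simp add: Post_def) (meson antisym not_le)
  then show False using sum_strategy_eq_1[OF assms(2), of s] by simp
qed

lemma first_hit_nonneg: "is_mdp P \<Longrightarrow> 0 \<le> first_hit P \<sigma> T n s"
  by (induction n arbitrary: s) (auto intro!: sum_nonneg mult_nonneg_nonneg simp: mdp_nonneg)

lemma sum_first_hit_le_1:
  assumes "is_mdp P" "is_strategy P \<sigma>"
  shows "(\<Sum>n<N. first_hit P \<sigma> T n s) \<le> 1"
proof (induction N arbitrary: s)
  case 0
  then show ?case by simp
next
  case (Suc N)
  show ?case
  proof (cases "s \<in> T")
    case True
    then show ?thesis by (subst sum.lessThan_Suc_shift) simp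
  next
    case False
    have "(\<Sum>n<Suc N. first_hit P \<sigma> T n s)
        = (\<Sum>n<N. \<Sum>s'\<in>UNIV. P s (\<sigma> s) s' * first_hit P \<sigma> T n s')"
      using False by (subst sum.lessThan_Suc_shift) simp
    also have "\<dots> = (\<Sum>s'\<in>UNIV. P s (\<sigma> s) s' * (\<Sum>n<N. first_hit P \<sigma> T n s'))"
      by (subst sum.swap) (simp add: sum_distrib_left)
    also have "\<dots> \<le> (\<Sum>s'\<in>UNIV. P s (\<sigma> s) s' * 1)"
      by (intro sum_mono mult_left_mono Suc.IH mdp_nonneg[OF assms(1)])
    also have "\<dots> = 1" using sum_strategy_eq_1[OF assms(2)] by simp
    finally show ?thesis .
  qed
qed

lemma summable_first_hit:
  assumes "is_mdp P" "is_strategy P \<sigma>"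
  shows "summable (\<lambda>n. first_hit P \<sigma> T n s)"
  by (rule summableI_nonneg_bounded[where x = 1])
    (use first_hit_nonneg[OF assms(1)] sum_first_hit_le_1[OF assms] in auto)

lemma reach_prob_nonneg:
  assumes "is_mdp P" "is_strategy P \<sigma>"
  shows "0 \<le> reach_prob P \<sigma> T s"
  unfolding reach_prob_def
  by (intro suminf_nonneg summable_first_hit[OF assms] first_hit_nonneg[OF assms(1)])

lemma reach_prob_unfold:
  assumes "is_mdp P" "is_strategy P \<sigma>"
  shows "reach_prob P \<sigma> T s =
    (if s \<in> T then 1 else (\<Sum>s'\<in>UNIV. P s (\<sigma> s) s' * reach_prob P \<sigma> T s'))"
proof -
  note summable = summable_first_hit[OF assms]
  have "reach_prob P \<sigma> T s = first_hit P \<sigma> T 0 s + (\<Sum>n. first_hit P \<sigma> T (Suc n) s)"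
    unfolding reach_prob_def using suminf_split_head[OF summable] by simp
  also have "(\<Sum>n. first_hit P \<sigma> T (Suc n) s)
      = (if s \<in> T then 0 else (\<Sum>n. \<Sum>s'\<in>UNIV. P s (\<sigma> s) s' * first_hit P \<sigma> T n s'))"
    by simp
  also have "(\<Sum>n. \<Sum>s'\<in>UNIV. P s (\<sigma> s) s' * first_hit P \<sigma> T n s')
      = (\<Sum>s'\<in>UNIV. P s (\<sigma> s) s' * reach_prob P \<sigma> T s')"
    unfolding reach_prob_def
    by (subst suminf_sum) (auto intro: summable_mult summable simp: suminf_mult summable)
  finally show ?thesis by simp
qed

lemma Bop_reach_prob:
  assumes "is_mdp P" "is_strategy P \<sigma>"
  shows "Bop P \<sigma> T (reach_prob P \<sigma> T) s = reach_prob P \<sigma> T s"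
  using reach_prob_unfold[OF assms, of T s]
  by (simp add: Bop_def sum_Post_eq_sum_UNIV[OF assms(1)])

lemma Dop_le_imp_successor_rank_less:
  assumes "is_mdp P" "is_strategy P \<sigma>"
    and "Dop P \<sigma> T r s \<le> r s" "s \<notin> T" "r s < \<infinity>"
  obtains t where "t \<in> Post P s (\<sigma> s)" "r t < r s"
proof -
  have "Min (r ` Post P s (\<sigma> s)) \<in> r ` Post P s (\<sigma> s)"
    using Post_strategy_nonempty[OF assms(1,2)] by (intro Min_in) auto
  then obtain t where t: "t \<in> Post P s (\<sigma> s)" and "r t = Min (r ` Post P s (\<sigma> s))"
    by auto
  then have "1 + r t \<le> r s" using assms(3,4) by (simp add: Dop_def)
  then have "r t < r s" using \<open>r s < \<infinity>\<close>
    by (cases "r t"; cases "r s") (auto simp: one_enat_def)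
  with t show thesis by (rule that)
qed

lemma ranked_subsolution_le_fixpoint:
  assumes mdp: "is_mdp P" and \<sigma>: "is_strategy P \<sigma>"
    and ranking: "\<forall>s. Dop P \<sigma> T r s \<le> r s"
    and subsolution: "\<forall>s. x s \<le> Bop P \<sigma> T x s"
    and positive_ranked: "\<forall>s. s \<notin> T \<longrightarrow> x s > 0 \<longrightarrow> r s < \<infinity>"
    and fixpoint: "\<forall>s. Bop P \<sigma> T y s = y s"
    and y_nonneg: "\<forall>s. 0 \<le> y s"
  shows "x s \<le> y s"
proof -
  define d where "d s = x s - y s" for s
  define m where "m = Max (range d)"
  have d_le_m: "\<forall>t. d t \<le> m" unfolding m_def by simp
  have "m \<in> range d" unfolding m_def by (intro Max_in) auto
  then obtain s\<^sub>0 where "d s\<^sub>0 = m" by auto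
  have not_max: "d s \<noteq> m" if "m > 0" for s
  proof (induction "r s" arbitrary: s rule: less_induct)
    case less
    show ?case
    proof
      assume max: "d s = m"
      have "s \<notin> T"
      proof
        assume "s \<in> T"
        then have "x s \<le> y s"
          using subsolution[rule_format, of s] fixpoint[rule_format, of s] by (simp add: Bop_def)
        then show False using max \<open>m > 0\<close> by (simp add: d_def)
      qed
      have "x s > 0" using max \<open>m > 0\<close> y_nonneg[rule_format, of s] unfolding d_def by linarith
      then have "r s < \<infinity>" using positive_ranked \<open>s \<notin> T\<close> by blast
      then obtain t where t: "t \<in> Post P s (\<sigma> s)" and "r t < r s"
        using Dop_le_imp_successor_rank_less[OF mdp \<sigma>] ranking \<open>s \<notin> T\<close> by blast
      have "x s \<le> (\<Sum>s'\<in>UNIV. P s (\<sigma> s) s' * x s')" "y s = (\<Sum>s'\<in>UNIV. P s (\<sigma> s) s' * y s')"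
        using subsolution[rule_format, of s] fixpoint[rule_format, of s] \<open>s \<notin> T\<close>
        by (simp_all add: Bop_def sum_Post_eq_sum_UNIV[OF mdp])
      then have "m \<le> (\<Sum>s'\<in>UNIV. P s (\<sigma> s) s' * d s')"
        using max by (simp add: d_def right_diff_distrib sum_subtractf)
      moreover have "P s (\<sigma> s) t > 0" using t by (simp add: Post_def)
      ultimately have "d t = m"
        by (intro weighted_mean_ge_bound_imp_eq[where A = UNIV and p = "P s (\<sigma> s)", of d m t])
          (use d_le_m mdp_nonneg[OF mdp] sum_strategy_eq_1[OF \<sigma>] in auto)
      with less \<open>r t < r s\<close> show False by blast
    qed
  qed
  have "m \<le> 0" using not_max \<open>d s\<^sub>0 = m\<close> by fastforce
  then show ?thesis using d_le_m[rule_format, of s] unfolding d_def by linarith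
qed

lemma reach_prob_le_max_reach_prob:
  assumes "is_strategy P \<sigma>"
  shows "reach_prob P \<sigma> T s \<le> max_reach_prob P T s"
proof -
  have "{reach_prob P \<sigma>' T s | \<sigma>'. is_strategy P \<sigma>'} \<subseteq> range (\<lambda>\<sigma>'. reach_prob P \<sigma>' T s)"
    by auto
  then have "finite {reach_prob P \<sigma>' T s | \<sigma>'. is_strategy P \<sigma>'}"
    by (rule finite_subset) simp
  then show ?thesis
    unfolding max_reach_prob_def by (rule Max_ge) (use assms in auto)
qed

theorem proposition5:
  fixes P :: "'s::finite \<Rightarrow> 'a::finite \<Rightarrow> 's \<Rightarrow> real"
    and T :: "'s set" and x :: "'s \<Rightarrow> real" and r :: "'s \<Rightarrow> enat" and \<sigma> :: "'s \<Rightarrow> 'a"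
  assumes "is_mdp P"
    and "is_strategy P \<sigma>"
    and "\<forall>s. 0 \<le> x s \<and> x s \<le> 1"
    and "\<forall>s. Dop P \<sigma> T r s \<le> r s"
    and "\<forall>s. x s \<le> Bop P \<sigma> T x s"
    and "\<forall>s. s \<notin> T \<longrightarrow> x s > 0 \<longrightarrow> r s < \<infinity>"
  shows "\<forall>s. max_reach_prob P T s \<ge> reach_prob P \<sigma> T s \<and> reach_prob P \<sigma> T s \<ge> x s"
proof
  fix s
  have "x s \<le> reach_prob P \<sigma> T s"
    using assms(1,2,4,5,6) Bop_reach_prob[OF assms(1,2)] reach_prob_nonneg[OF assms(1,2)]
    by (intro ranked_subsolution_le_fixpoint[where r = r]) auto
  then show "max_reach_prob P T s \<ge> reach_prob P \<sigma> T s \<and> reach_prob P \<sigma> T s \<ge> x s"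
    using reach_prob_le_max_reach_prob[OF assms(2)] by simp
qed

end
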